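(* Let $E:\mathcal{H}\to\mathbb{R}$ be of class $C^2$ and let $R:\mathcal{H}\to\mathcal{H}$ be a retraction of class $C^2$ such that for all $P\in\mathcal{M}_N$ and all $X\in\mathcal{H}$ small enough, $R(P+X)\in\mathcal{M}_N$ and $R(P+X)=P+\Pi_P(X)+O(X^2)$. Then there exists $\beta_0>0$ such that for all $0<\beta\le\beta_0$ and all $P^0\in\mathcal{M}_N$, the iterates \[ P^{k+1}:=R\big(P^k-\beta\,\Pi_{P^k}(\nabla E(P^k))\big) \] satisfy: (1) $(E(P^k))_{k\in\mathbb{N}}$ is a nonincreasing sequence converging to some critical value $E_{\rm c}$ of $E$ on $\mathcal{M}_N$; (2) as $k\to\infty$, $\Pi_{P^k}\nabla E(P^k)\to 0$, $\|P^{k+1}-P^k\|_{\rm F}\to 0$, and $d(P^k,A_{\rm c})\to0$, where $A_{\rm c}$ is one of the connected components of $C(E_{\rm c}):=\{P\in\mathcal{M}_N\mid E(P)=E_{\rm c}\text{ and }\Pi_P(\nabla E(P))=0\}$.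
   Context: $\mathcal{H}$ denotes the space of real symmetric $N_b\times N_b$ matrices with the Frobenius inner product $\langle A,B\rangle_{\rm F}=\mathrm{Tr}(AB)$ and norm $\|\cdot\|_{\rm F}$; $d$ is the associated distance. For an integer $1\le N\le N_b$, $\mathcal{M}_N:=\{P\in\mathcal{H}\mid P^2=P,\ \mathrm{Tr}(P)=N\}$ (rank-$N$ orthogonal projectors). For $P\in\mathcal{M}_N$, $\Pi_P:\mathcal{H}\to\mathcal{H}$, $\Pi_P(X)=PX(1-P)+(1-P)XP$, is the Frobenius-orthogonal projection onto the tangent space $T_P\mathcal{M}_N=\{X\in\mathcal{H}\mid PXP=(1-P)X(1-P)=0\}$. $\nabla E$ is the Frobenius gradient of $E$. A critical point of $E$ on $\mathcal{M}_N$ is a $P\in\mathcal{M}_N$ with $\Pi_P(\nabla E(P))=0$, and a critical value is the value of $E$ at a critical point. *)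

theory Defs
  imports "HOL-Analysis.Analysis"
begin

text \<open>Real N_b x N_b matrices are real^'n^'n with N_b = CARD('n). The Euclidean inner
product and norm of this type are the Frobenius ones (sum over all entries).\<close>

definition symm :: "real^'n^'n \<Rightarrow> bool" where
  "symm A \<longleftrightarrow> transpose A = A"

definition MN :: "nat \<Rightarrow> (real^'n^'n) set" where
  "MN N = {P. symm P \<and> P ** P = P \<and> trace P = real N}"

definition PiP :: "real^'n^'n \<Rightarrow> real^'n^'n \<Rightarrow> real^'n^'n" where
  "PiP P X = P ** X ** (mat 1 - P) + (mat 1 - P) ** X ** P"

definition C2 :: "('a::euclidean_space \<Rightarrow> 'b::real_normed_vector) \<Rightarrow> bool" where
  "C2 f \<longleftrightarrow> (\<exists>f' f''. (\<forall>x. (f has_derivative blinfun_apply (f' x)) (at x))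
      \<and> (\<forall>x. (f' has_derivative blinfun_apply (f'' x)) (at x))
      \<and> continuous_on UNIV f'')"

definition gradH :: "(real^'n^'n \<Rightarrow> real) \<Rightarrow> real^'n^'n \<Rightarrow> real^'n^'n" where
  "gradH E A = (THE G. symm G \<and> (\<forall>X. symm X \<longrightarrow> frechet_derivative E (at A) X = G \<bullet> X))"

definition critical_point :: "nat \<Rightarrow> (real^'n^'n \<Rightarrow> real) \<Rightarrow> real^'n^'n \<Rightarrow> bool" where
  "critical_point N E P \<longleftrightarrow> P \<in> MN N \<and> PiP P (gradH E P) = 0"

definition critical_value :: "nat \<Rightarrow> (real^'n^'n \<Rightarrow> real) \<Rightarrow> real \<Rightarrow> bool" where
  "critical_value N E c \<longleftrightarrow> (\<exists>P. critical_point N E P \<and> E P = c)"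

definition crit_set :: "nat \<Rightarrow> (real^'n^'n \<Rightarrow> real) \<Rightarrow> real \<Rightarrow> (real^'n^'n) set" where
  "crit_set N E c = {P. P \<in> MN N \<and> E P = c \<and> PiP P (gradH E P) = 0}"

primrec rgd_iter :: "(real^'n^'n \<Rightarrow> real) \<Rightarrow> (real^'n^'n \<Rightarrow> real^'n^'n) \<Rightarrow> real
    \<Rightarrow> real^'n^'n \<Rightarrow> nat \<Rightarrow> real^'n^'n" where
  "rgd_iter E R \<beta> P0 0 = P0"
| "rgd_iter E R \<beta> P0 (Suc k) =
     (let P = rgd_iter E R \<beta> P0 k in R (P - \<beta> *\<^sub>R PiP P (gradH E P)))"

end

theory Submission
  imports Defs
begin

text \<open>
  Each iteration moves along the projected gradient \<open>w = \<Pi>\<^sub>P (\<nabla>E P)\<close>. Since \<open>R P = P\<close> and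
  \<open>DR(P) = \<Pi>\<^sub>P\<close> on symmetric matrices, \<open>R (P - \<beta> w) = P - \<beta> w + O(\<beta>\<^sup>2 |w|\<^sup>2)\<close> uniformly on
  the compact manifold \<open>M\<^sub>N\<close>, so for small \<open>\<beta>\<close> every step lowers \<open>E\<close> by at least
  \<open>\<beta>/2 |w|\<^sup>2\<close> and has length at most \<open>2 \<beta> |w|\<close>. Hence \<open>E(P\<^sup>k)\<close> decreases to a limit \<open>E\<^sub>c\<close>,
  and the projected gradients, and with them the steps, tend to zero. The \<open>\<omega>\<close>-limit set of the
  iterates then consists of critical points at level \<open>E\<^sub>c\<close>, and it is connected because
  consecutive iterates become arbitrarily close; so it lies in one component of \<open>C(E\<^sub>c)\<close>,
  which the iterates therefore approach.
\<close>

lemma matrix_add_rdistrib: "((A::'a::semiring_1^'m^'n) + B) ** C = A ** C + B ** C"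
  by (simp add: matrix_matrix_mult_def vec_eq_iff sum.distrib distrib_right)

lemma matrix_diff_ldistrib: "(A::'a::ring_1^'m^'n) ** (B - C) = A ** B - A ** C"
  by (simp add: eq_diff_eq flip: matrix_add_ldistrib)

lemma matrix_diff_rdistrib: "((A::'a::ring_1^'m^'n) - B) ** C = A ** C - B ** C"
  by (simp add: eq_diff_eq flip: matrix_add_rdistrib)

lemma transpose_add: "transpose (A + B) = transpose A + transpose (B::'a::semiring_1^'m^'n)"
  by (simp add: transpose_def vec_eq_iff)

lemma transpose_diff: "transpose (A - B) = transpose A - transpose (B::'a::ring_1^'m^'n)"
  by (simp add: transpose_def vec_eq_iff)

lemma trace_transpose: "trace (transpose A) = trace (A::'a::semiring_1^'n^'n)"
  by (simp add: trace_def transpose_def)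

lemma inner_eq_trace: "A \<bullet> B = trace (transpose A ** (B::real^'n^'n))"
proof -
  have "A \<bullet> B = (\<Sum>k\<in>UNIV. \<Sum>i\<in>UNIV. A$k$i * B$k$i)"
    by (simp add: inner_vec_def inner_real_def)
  also have "\<dots> = (\<Sum>i\<in>UNIV. \<Sum>k\<in>UNIV. A$k$i * B$k$i)"
    by (rule sum.swap)
  finally show ?thesis
    by (simp add: trace_def matrix_matrix_mult_def transpose_def)
qed

lemma inner_matrix_mult_left:
  fixes A B C :: "real^'n^'n"
  shows "(A ** B) \<bullet> C = B \<bullet> (transpose A ** C)"
  by (simp only: inner_eq_trace matrix_transpose_mul matrix_mul_assoc)

lemma inner_matrix_mult_right:
  fixes A B C :: "real^'n^'n"
  shows "(A ** B) \<bullet> C = A \<bullet> (C ** transpose B)"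
  by (metis inner_eq_trace matrix_mul_assoc matrix_transpose_mul trace_mul_sym)

lemma inner_transpose: "transpose A \<bullet> B = A \<bullet> transpose (B::real^'n^'n)"
  by (metis inner_eq_trace matrix_transpose_mul trace_mul_sym trace_transpose transpose_transpose)

lemma symm_zero: "symm 0"
  and symm_add: "symm A \<Longrightarrow> symm B \<Longrightarrow> symm (A + B)"
  and symm_diff: "symm A \<Longrightarrow> symm B \<Longrightarrow> symm (A - B)"
  and symm_scaleR: "symm A \<Longrightarrow> symm (c *\<^sub>R A)"
  by (simp_all add: symm_def transpose_add transpose_diff transpose_scalar transpose_def vec_eq_iff)

lemma idempotent_compl:
  fixes P :: "real^'n^'n"
  assumes "P ** P = P"
  shows "P ** (mat 1 - P) = 0" "(mat 1 - P) ** P = 0" "(mat 1 - P) ** (mat 1 - P) = mat 1 - P"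
  using assms by (simp_all add: matrix_diff_ldistrib matrix_diff_rdistrib)

lemma PiP_PiP:
  fixes P :: "real^'n^'n"
  assumes "P ** P = P"
  shows "PiP P (PiP P X) = PiP P X"
proof -
  define Q where "Q = mat 1 - P"
  have PQ: "P ** Q = 0" "Q ** P = 0" "Q ** Q = Q"
    using idempotent_compl[OF assms] by (simp_all add: Q_def)
  have "P ** (P ** X ** Q + Q ** X ** P) ** Q = (P ** P) ** X ** (Q ** Q) + (P ** Q) ** X ** (P ** Q)"
   and "Q ** (P ** X ** Q + Q ** X ** P) ** P = (Q ** P) ** X ** (Q ** P) + (Q ** Q) ** X ** (P ** P)"
    by (simp_all only: matrix_add_ldistrib matrix_add_rdistrib matrix_mul_assoc)
  then show ?thesis
    by (simp add: PiP_def Q_def[symmetric] PQ assms)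
qed

lemma PiP_scaleR: "PiP P (c *\<^sub>R X) = c *\<^sub>R PiP P X"
  by (simp add: PiP_def matrix_scalar_ac scaleR_add_right flip: scalar_matrix_assoc)

lemma PiP_zero [simp]: "PiP P 0 = 0"
  by (simp add: PiP_def)

lemma symm_PiP:
  assumes "symm P" "symm X"
  shows "symm (PiP P X)"
proof -
  have "transpose (mat 1 - P) = mat 1 - P" "transpose P = P" "transpose X = X"
    using assms by (simp_all add: symm_def transpose_diff)
  then show ?thesis
    by (simp add: symm_def PiP_def transpose_add matrix_transpose_mul matrix_mul_assoc add.commute)
qed

lemma PiP_self_adjoint:
  fixes P :: "real^'n^'n"
  assumes "symm P"
  shows "PiP P A \<bullet> B = A \<bullet> PiP P B"
proof -
  have sandwich: "(M ** A ** K) \<bullet> B = A \<bullet> (transpose M ** B ** transpose K)" for M K :: "real^'n^'n"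
    by (subst inner_matrix_mult_right, subst inner_matrix_mult_left) (simp add: matrix_mul_assoc)
  have "transpose (mat 1 - P) = mat 1 - P" "transpose P = P"
    using assms by (simp_all add: symm_def transpose_diff)
  then show ?thesis
    by (simp add: PiP_def inner_add_left inner_add_right sandwich)
qed

lemma inner_PiP_self:
  fixes P :: "real^'n^'n"
  assumes "symm P" "P ** P = P"
  shows "G \<bullet> PiP P G = (norm (PiP P G))\<^sup>2"
  by (simp add: power2_norm_eq_inner PiP_self_adjoint[OF assms(1)] PiP_PiP[OF assms(2)])

lemma norm_PiP_le:
  fixes P :: "real^'n^'n"
  assumes "symm P" "P ** P = P"
  shows "norm (PiP P G) \<le> norm G"
proof -
  have "(norm (PiP P G))\<^sup>2 \<le> norm G * norm (PiP P G)"
    using inner_PiP_self[OF assms, of G] norm_cauchy_schwarz[of G "PiP P G"] by simp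
  then show ?thesis
    by (cases "PiP P G = 0") (auto simp: power2_eq_square intro: mult_right_le_imp_le)
qed

lemma MN_symm: "P \<in> MN N \<Longrightarrow> symm P"
  and MN_idempotent: "P \<in> MN N \<Longrightarrow> P ** P = P"
  by (simp_all add: MN_def)

lemma norm_MN: "P \<in> MN N \<Longrightarrow> norm P = sqrt (real N)"
  by (simp add: MN_def symm_def norm_eq_sqrt_inner inner_eq_trace)

lemma continuous_on_matrix_mult [continuous_intros]:
  fixes f g :: "'a::topological_space \<Rightarrow> real^'n^'n"
  assumes "continuous_on S f" "continuous_on S g"
  shows "continuous_on S (\<lambda>x. f x ** g x)"
  unfolding matrix_matrix_mult_def
  by (intro continuous_intros continuous_on_component assms)

lemma continuous_on_transpose [continuous_intros]:
  fixes f :: "'a::topological_space \<Rightarrow> real^'n^'n"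
  assumes "continuous_on S f"
  shows "continuous_on S (\<lambda>x. transpose (f x))"
  unfolding transpose_def
  by (intro continuous_intros continuous_on_component assms)

lemma continuous_on_trace [continuous_intros]:
  fixes f :: "'a::topological_space \<Rightarrow> real^'n^'n"
  assumes "continuous_on S f"
  shows "continuous_on S (\<lambda>x. trace (f x))"
  unfolding trace_def
  by (intro continuous_intros continuous_on_component assms)

lemma compact_MN: "compact (MN N :: (real^'n^'n) set)"
  unfolding compact_eq_bounded_closed
proof
  show "bounded (MN N :: (real^'n^'n) set)"
    by (metis bounded_iff norm_MN order_refl)
  have "MN N = {P::real^'n^'n. transpose P = P} \<inter> {P. P ** P = P} \<inter> {P. trace P = real N}"
    by (auto simp: MN_def symm_def)
  also have "closed \<dots>"
    by (intro closed_Int closed_Collect_eq continuous_intros)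
  finally show "closed (MN N :: (real^'n^'n) set)" .
qed

section \<open>Second-order Taylor bounds and the Frobenius gradient\<close>

lemma C2_imp_continuous_on: "C2 f \<Longrightarrow> continuous_on UNIV f"
  unfolding C2_def by (metis continuous_on_eq_continuous_within has_derivative_continuous)

lemma C2_quadratic_remainder:
  fixes f :: "'a::euclidean_space \<Rightarrow> 'b::real_normed_vector"
  assumes "C2 f" "compact K" "convex K"
  obtains M where "M \<ge> 0"
    "\<And>x y. x \<in> K \<Longrightarrow> y \<in> K \<Longrightarrow>
       norm (f y - f x - frechet_derivative f (at x) (y - x)) \<le> M * (norm (y - x))\<^sup>2"
proof -
  obtain f' f'' where f': "\<And>x. (f has_derivative blinfun_apply (f' x)) (at x)"
    and f'': "\<And>x. (f' has_derivative blinfun_apply (f'' x)) (at x)"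
    and cont: "continuous_on UNIV f''"
    using assms(1) unfolding C2_def by blast
  obtain B where B: "\<And>z. z \<in> K \<Longrightarrow> norm (f'' z) \<le> B"
    using compact_imp_bounded[OF compact_continuous_image[OF continuous_on_subset[OF cont] assms(2)]]
    by (auto simp: bounded_iff)
  have "norm (f y - f x - f' x (y - x)) \<le> max B 0 * (norm (y - x))\<^sup>2" if x: "x \<in> K" and y: "y \<in> K" for x y
  proof -
    let ?S = "closed_segment x y"
    have SK: "?S \<subseteq> K"
      using x y assms(3) by (rule closed_segment_subset)
    have f'_lipschitz: "norm (f' z - f' x) \<le> B * norm (z - x)" if "z \<in> ?S" for z
    proof (rule differentiable_bound[where S="?S" and f'="\<lambda>z. blinfun_apply (f'' z)"])
      show "onorm (blinfun_apply (f'' u)) \<le> B" if "u \<in> ?S" for u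
        using B SK that by (auto simp: norm_blinfun.rep_eq[symmetric])
    qed (use that in \<open>auto intro: has_derivative_at_withinI f''\<close>)
    have "norm (f y - f x - f' x (y - x)) \<le> norm (y - x) * (max B 0 * norm (y - x))"
    proof (rule differentiable_bound_linearization[where S="?S" and f'="\<lambda>z. blinfun_apply (f' z)"])
      show "x + t *\<^sub>R (y - x) \<in> ?S" if "t \<in> {0..1}" for t
        using that unfolding in_segment by (intro exI[of _ t]) (auto simp: algebra_simps)
      show "onorm (blinfun_apply (f' u) - blinfun_apply (f' x)) \<le> max B 0 * norm (y - x)"
        if "u \<in> ?S" for u
      proof -
        have "onorm (blinfun_apply (f' u) - blinfun_apply (f' x)) = norm (f' u - f' x)"
          by (simp add: norm_blinfun.rep_eq minus_blinfun.rep_eq fun_diff_def)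
        also have "\<dots> \<le> max B 0 * norm (y - x)"
          using f'_lipschitz[OF that] segment_bound(1)[OF that]
          by (smt (verit) mult_mono norm_ge_zero)
        finally show ?thesis .
      qed
    qed (auto intro: has_derivative_at_withinI f')
    then show ?thesis
      by (simp add: power2_eq_square mult_ac)
  qed
  moreover have "frechet_derivative f (at x) = f' x" for x
    using f' by (rule frechet_derivative_at[symmetric])
  ultimately show ?thesis
    using that[of "max B 0"] by simp
qed

definition symm_riesz :: "((real^'n^'n) \<Rightarrow>\<^sub>L real) \<Rightarrow> real^'n^'n" where
  "symm_riesz D = (let G = (\<Sum>b\<in>Basis. D b *\<^sub>R b) in (1/2) *\<^sub>R (G + transpose G))"

lemma symm_symm_riesz: "symm (symm_riesz D)"
  by (simp add: symm_riesz_def Let_def symm_def transpose_scalar transpose_add add.commute)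

lemma inner_symm_riesz:
  fixes D :: "(real^'n^'n) \<Rightarrow>\<^sub>L real"
  assumes "symm X"
  shows "symm_riesz D \<bullet> X = D X"
proof -
  define G where "G = (\<Sum>b\<in>(Basis::(real^'n^'n) set). D b *\<^sub>R b)"
  have "D X = D (\<Sum>b\<in>Basis. (X \<bullet> b) *\<^sub>R b)"
    by (simp add: euclidean_representation)
  also have "\<dots> = G \<bullet> X"
    by (simp add: G_def blinfun.sum_right blinfun.scaleR_right inner_sum_right inner_commute mult.commute)
  finally have "G \<bullet> X = D X" ..
  moreover have "transpose G \<bullet> X = G \<bullet> X"
    using assms by (simp add: inner_transpose symm_def)
  ultimately show ?thesis
    by (simp add: symm_riesz_def G_def[symmetric] inner_add_left)
qed

lemma gradH_eq_symm_riesz: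
  assumes "(E has_derivative blinfun_apply D) (at A)"
  shows "gradH E A = symm_riesz D"
  unfolding gradH_def
proof (rule the_equality)
  have DE: "frechet_derivative E (at A) = blinfun_apply D"
    using frechet_derivative_at[OF assms] by simp
  then show "symm (symm_riesz D) \<and> (\<forall>X. symm X \<longrightarrow> frechet_derivative E (at A) X = symm_riesz D \<bullet> X)"
    by (simp add: symm_symm_riesz inner_symm_riesz)
  fix G assume G: "symm G \<and> (\<forall>X. symm X \<longrightarrow> frechet_derivative E (at A) X = G \<bullet> X)"
  have "symm (G - symm_riesz D)"
    using G symm_symm_riesz by (rule symm_diff[OF conjunct1])
  with G have "(G - symm_riesz D) \<bullet> (G - symm_riesz D) = 0"
    by (simp add: inner_diff_left inner_symm_riesz DE)
  then show "G = symm_riesz D"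
    by simp
qed

lemma C2_symm_gradH: "C2 E \<Longrightarrow> symm (gradH E A)"
  unfolding C2_def using gradH_eq_symm_riesz symm_symm_riesz by metis

lemma C2_continuous_on_gradH:
  assumes "C2 E"
  shows "continuous_on UNIV (gradH E :: real^'n^'n \<Rightarrow> real^'n^'n)"
proof -
  obtain E' E'' where E': "\<And>x. (E has_derivative blinfun_apply (E' x)) (at x)"
    and E'': "\<And>x. (E' has_derivative blinfun_apply (E'' x)) (at x)"
    using assms unfolding C2_def by blast
  have "continuous_on UNIV E'"
    using E'' by (metis continuous_on_eq_continuous_within has_derivative_continuous)
  then have "continuous_on UNIV (\<lambda>A. symm_riesz (E' A))"
    unfolding symm_riesz_def Let_def transpose_def
    by (intro continuous_intros continuous_on_component)
  then show ?thesis
    using gradH_eq_symm_riesz[OF E'] by simp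
qed

lemma C2_frechet_derivative_eq_gradH:
  assumes "C2 E" "symm X"
  shows "frechet_derivative E (at A) X = gradH E A \<bullet> X"
proof -
  obtain E' where E': "\<And>x. (E has_derivative blinfun_apply (E' x)) (at x)"
    using assms(1) unfolding C2_def by blast
  have "frechet_derivative E (at A) = blinfun_apply (E' A)"
    using E' by (rule frechet_derivative_at[symmetric])
  then show ?thesis
    using assms(2) by (simp add: gradH_eq_symm_riesz[OF E'] inner_symm_riesz)
qed

lemma energy_uniform_expansion:
  fixes E :: "real^'n^'n \<Rightarrow> real"
  assumes "C2 E"
  obtains C where "C \<ge> 0"
    "\<And>P Q. P \<in> MN N \<Longrightarrow> Q \<in> MN N \<Longrightarrow> E Q - E P - gradH E P \<bullet> (Q - P) \<le> C * (norm (Q - P))\<^sup>2"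
proof -
  obtain C where "C \<ge> 0" and C: "\<And>x y. x \<in> cball 0 (sqrt (real N)) \<Longrightarrow> y \<in> cball 0 (sqrt (real N)) \<Longrightarrow>
      norm (E y - E x - frechet_derivative E (at x) (y - x)) \<le> C * (norm (y - x))\<^sup>2"
    using C2_quadratic_remainder[OF \<open>C2 E\<close>, of "cball 0 (sqrt (real N))"] by auto
  have "E Q - E P - gradH E P \<bullet> (Q - P) \<le> C * (norm (Q - P))\<^sup>2" if "P \<in> MN N" "Q \<in> MN N" for P Q
    using C[of P Q] that C2_frechet_derivative_eq_gradH[OF \<open>C2 E\<close>]
    by (simp add: norm_MN MN_symm symm_diff abs_le_iff)
  with \<open>C \<ge> 0\<close> that show ?thesis
    by blast
qed

section \<open>First-order retractions\<close>

definition retraction_at :: "nat \<Rightarrow> (real^'n^'n \<Rightarrow> real^'n^'n) \<Rightarrow> real^'n^'n \<Rightarrow> bool" where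
  "retraction_at N R P \<longleftrightarrow> (\<exists>\<delta>>0. \<exists>C. \<forall>X. symm X \<and> norm X < \<delta> \<longrightarrow>
     R (P + X) \<in> MN N \<and> norm (R (P + X) - P - PiP P X) \<le> C * (norm X)\<^sup>2)"

lemma retraction_at_fixed:
  assumes "retraction_at N R P"
  shows "R P = P"
proof -
  obtain \<delta> C where "\<delta> > 0"
    and C: "\<And>X. symm X \<Longrightarrow> norm X < \<delta> \<Longrightarrow> norm (R (P + X) - P - PiP P X) \<le> C * (norm X)\<^sup>2"
    using assms unfolding retraction_at_def by meson
  with C[of 0] \<open>\<delta> > 0\<close> symm_zero show ?thesis
    by simp
qed

lemma retraction_at_frechet_derivative:
  assumes retr: "retraction_at N R P" and "R differentiable at P" "symm X"
  shows "frechet_derivative R (at P) X = PiP P X"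
proof -
  \<comment> \<open>Both sides are the velocity at \<open>t = 0\<close> of the curve \<open>t \<mapsto> R (P + t X)\<close>.\<close>
  obtain \<delta> C where "\<delta> > 0" and C: "\<And>Y. symm Y \<Longrightarrow> norm Y < \<delta> \<Longrightarrow> norm (R (P + Y) - P - PiP P Y) \<le> C * (norm Y)\<^sup>2"
    using retr unfolding retraction_at_def by blast
  let ?D = "frechet_derivative R (at P)"
  have "((\<lambda>t. P + t *\<^sub>R X) has_derivative (\<lambda>t. t *\<^sub>R X)) (at 0)"
    by (auto intro!: derivative_eq_intros)
  moreover have "(R has_derivative ?D) (at (P + 0 *\<^sub>R X))"
    using assms(2) by (simp add: frechet_derivative_works)
  ultimately have "((R \<circ> (\<lambda>t. P + t *\<^sub>R X)) has_derivative (?D \<circ> (\<lambda>t. t *\<^sub>R X))) (at 0)"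
    by (rule diff_chain_at)
  then have D: "((\<lambda>t. R (P + t *\<^sub>R X)) has_vector_derivative ?D X) (at 0)"
    using assms(2) by (simp add: o_def has_vector_derivative_def frechet_derivative_works linear_cmul
        has_derivative_linear)
  have "((\<lambda>t. R (P + t *\<^sub>R X)) has_vector_derivative PiP P X) (at 0)"
    unfolding has_vector_derivative_def has_derivative_at
  proof (intro conjI bounded_linear_scaleR_left)
    have "\<forall>\<^sub>F t in at 0. norm (R (P + t *\<^sub>R X) - R P - t *\<^sub>R PiP P X) / norm t \<le> \<bar>C\<bar> * norm t * (norm X)\<^sup>2"
    proof -
      have "\<forall>\<^sub>F t in at (0::real). norm (t *\<^sub>R X) < \<delta>"
        using \<open>\<delta> > 0\<close> by (intro order_tendstoD(2)[of _ 0]) (auto intro!: tendsto_eq_intros)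
      then show ?thesis
      proof (rule eventually_mono)
        fix t :: real assume "norm (t *\<^sub>R X) < \<delta>"
        then have "norm (R (P + t *\<^sub>R X) - P - t *\<^sub>R PiP P X) \<le> C * (\<bar>t\<bar> * norm X)\<^sup>2"
          using C[of "t *\<^sub>R X"] assms(3) by (simp add: symm_scaleR PiP_scaleR)
        also have "\<dots> \<le> \<bar>C\<bar> * \<bar>t\<bar> * (norm X)\<^sup>2 * \<bar>t\<bar>"
          by (simp add: power2_eq_square abs_mult mult_right_mono mult_ac)
        finally show "norm (R (P + t *\<^sub>R X) - R P - t *\<^sub>R PiP P X) / norm t \<le> \<bar>C\<bar> * norm t * (norm X)\<^sup>2"
          using retraction_at_fixed[OF retr] by (cases "t = 0") (simp_all add: divide_le_eq)
      qed
    qed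
    moreover have "((\<lambda>t. \<bar>C\<bar> * norm t * (norm X)\<^sup>2) \<longlongrightarrow> 0) (at (0::real))"
      by (auto intro!: tendsto_eq_intros)
    ultimately show "((\<lambda>t. norm (R (P + (0 + t) *\<^sub>R X) - R (P + 0 *\<^sub>R X) - t *\<^sub>R PiP P X) / norm t) \<longlongrightarrow> 0) (at 0)"
      by (auto intro: tendsto_sandwich[of "\<lambda>_. 0"])
  qed
  then show ?thesis
    using D vector_derivative_unique_at by blast
qed

lemma retraction_uniform_expansion:
  fixes R :: "real^'n^'n \<Rightarrow> real^'n^'n"
  assumes "C2 R" and retr: "\<And>P. P \<in> MN N \<Longrightarrow> retraction_at N R P"
  obtains \<delta> C where "\<delta> > 0" "C \<ge> 0"
    "\<And>P X. P \<in> MN N \<Longrightarrow> symm X \<Longrightarrow> norm X < \<delta> \<Longrightarrow>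
       R (P + X) \<in> MN N \<and> norm (R (P + X) - P - PiP P X) \<le> C * (norm X)\<^sup>2"
proof -
  \<comment> \<open>The radius is a Lebesgue number for the cover of \<open>MN N\<close> by the balls of the local
    hypothesis; the constant is the Taylor constant of \<open>R\<close>, since \<open>DR(P) = \<Pi>\<^sub>P\<close>.\<close>
  obtain d where d: "\<And>P. P \<in> MN N \<Longrightarrow> d P > 0 \<and> (\<forall>X. symm X \<and> norm X < d P \<longrightarrow> R (P + X) \<in> MN N)"
    using retr unfolding retraction_at_def by metis
  obtain \<delta> where "\<delta> > 0" and \<delta>: "\<And>P. P \<in> MN N \<Longrightarrow> \<exists>G\<in>(\<lambda>c. ball c (d c)) ` MN N. ball P \<delta> \<subseteq> G"
    by (rule Heine_Borel_lemma[OF compact_MN, where \<G>="(\<lambda>c. ball c (d c)) ` MN N"]) (use d in auto)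
  have in_MN: "R (P + X) \<in> MN N" if "P \<in> MN N" "symm X" "norm X < \<delta>" for P X
  proof -
    obtain c where c: "c \<in> MN N" "ball P \<delta> \<subseteq> ball c (d c)"
      using \<delta>[OF \<open>P \<in> MN N\<close>] by blast
    moreover have "P + X \<in> ball P \<delta>"
      using that(3) by (simp add: dist_norm)
    ultimately have "P + X \<in> ball c (d c)"
      by blast
    then have "norm (P + X - c) < d c"
      by (simp add: dist_norm norm_minus_commute)
    moreover have "symm (P + X - c)"
      using that c(1) by (simp add: MN_symm symm_add symm_diff)
    ultimately have "R (c + (P + X - c)) \<in> MN N"
      using d[OF c(1)] by blast
    then show ?thesis
      by simp
  qed
  define K where "K = cball (0::real^'n^'n) (sqrt (real N) + \<delta>)"
  obtain M where "M \<ge> 0" and M: "\<And>x y. x \<in> K \<Longrightarrow> y \<in> K \<Longrightarrow>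
      norm (R y - R x - frechet_derivative R (at x) (y - x)) \<le> M * (norm (y - x))\<^sup>2"
    using C2_quadratic_remainder[OF \<open>C2 R\<close>, of K] unfolding K_def by auto
  have "norm (R (P + X) - P - PiP P X) \<le> M * (norm X)\<^sup>2" if "P \<in> MN N" "symm X" "norm X < \<delta>" for P X
  proof -
    have "P \<in> K" "P + X \<in> K"
      using that norm_triangle_ineq[of P X] \<open>\<delta> > 0\<close> by (auto simp: K_def norm_MN)
    moreover have "R differentiable at P"
      using \<open>C2 R\<close> unfolding C2_def differentiable_def by blast
    ultimately show ?thesis
      using M[of P "P + X"] retr[OF that(1)] that(2)
      by (simp add: retraction_at_fixed retraction_at_frechet_derivative)
  qed
  with that[of \<delta> M] \<open>\<delta> > 0\<close> \<open>M \<ge> 0\<close> in_MN show ?thesis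
    by blast
qed

lemma inexact_gradient_step_decrease:
  fixes g w Y :: "'a::real_inner"
  assumes gw: "g \<bullet> w = (norm w)\<^sup>2" and g: "norm g \<le> G" and w: "norm w \<le> G"
    and Y: "norm (Y + \<beta> *\<^sub>R w) \<le> M * (\<beta> * norm w)\<^sup>2"
    and "0 < \<beta>" "0 \<le> M" "0 \<le> L"
    and small: "\<beta> * (M * G) \<le> 1" "\<beta> * (G * M + 4 * L) \<le> 1 / 2"
  shows "norm Y \<le> 2 * \<beta> * norm w" "g \<bullet> Y + L * (norm Y)\<^sup>2 \<le> - (\<beta> / 2) * (norm w)\<^sup>2"
proof -
  define r where "r = Y + \<beta> *\<^sub>R w"
  have "M * (\<beta> * norm w)\<^sup>2 = (\<beta> * (M * norm w)) * (\<beta> * norm w)"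
    by (simp add: power2_eq_square)
  also have "\<dots> \<le> 1 * (\<beta> * norm w)"
    using small(1) w \<open>0 < \<beta>\<close> \<open>0 \<le> M\<close>
    by (intro mult_right_mono) (auto intro: order_trans[OF mult_left_mono[OF mult_left_mono]])
  finally have r: "norm r \<le> \<beta> * norm w"
    using Y by (simp add: r_def)
  have "norm Y \<le> norm r + norm (\<beta> *\<^sub>R w)"
    using norm_triangle_ineq4[of r "\<beta> *\<^sub>R w"] by (simp add: r_def)
  with r \<open>0 < \<beta>\<close> show Ynorm: "norm Y \<le> 2 * \<beta> * norm w"
    by simp
  have "g \<bullet> Y = g \<bullet> r - \<beta> * (norm w)\<^sup>2"
    by (simp add: r_def inner_diff_right gw algebra_simps)
  also have "g \<bullet> r \<le> G * (M * (\<beta> * norm w)\<^sup>2)"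
    using norm_cauchy_schwarz[of g r] g Y \<open>0 \<le> M\<close>
    by (smt (verit, best) mult_mono norm_ge_zero r_def)
  moreover have "L * (norm Y)\<^sup>2 \<le> L * (2 * \<beta> * norm w)\<^sup>2"
    using Ynorm \<open>0 \<le> L\<close> by (intro mult_left_mono power_mono) auto
  ultimately have "g \<bullet> Y + L * (norm Y)\<^sup>2 \<le> - \<beta> * (norm w)\<^sup>2 + \<beta> * (G * M + 4 * L) * (\<beta> * (norm w)\<^sup>2)"
    by (simp add: power2_eq_square algebra_simps)
  also have "\<dots> \<le> - \<beta> * (norm w)\<^sup>2 + 1 / 2 * (\<beta> * (norm w)\<^sup>2)"
    using small(2) \<open>0 < \<beta>\<close> by (intro add_left_mono mult_right_mono) auto
  finally show "g \<bullet> Y + L * (norm Y)\<^sup>2 \<le> - (\<beta> / 2) * (norm w)\<^sup>2"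
    by simp
qed

definition proj_grad :: "(real^'n^'n \<Rightarrow> real) \<Rightarrow> real^'n^'n \<Rightarrow> real^'n^'n" where
  "proj_grad E P = PiP P (gradH E P)"

lemma C2_continuous_on_proj_grad: "C2 E \<Longrightarrow> continuous_on UNIV (proj_grad E)"
  unfolding proj_grad_def PiP_def by (intro continuous_intros C2_continuous_on_gradH)

definition descent_step ::
    "nat \<Rightarrow> (real^'n^'n \<Rightarrow> real) \<Rightarrow> (real^'n^'n \<Rightarrow> real^'n^'n) \<Rightarrow> real \<Rightarrow> real^'n^'n \<Rightarrow> bool" where
  "descent_step N E R \<beta> P \<longleftrightarrow> (let P' = R (P - \<beta> *\<^sub>R proj_grad E P) in
     P' \<in> MN N \<and> E P' \<le> E P - \<beta> / 2 * (norm (proj_grad E P))\<^sup>2 \<and>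
     norm (P' - P) \<le> 2 * \<beta> * norm (proj_grad E P))"

lemma retraction_step_descent:
  fixes E :: "real^'n^'n \<Rightarrow> real" and R :: "real^'n^'n \<Rightarrow> real^'n^'n"
  assumes "C2 E" "P \<in> MN N" "0 < \<beta>"
    and R_exp: "\<And>X. symm X \<Longrightarrow> norm X < \<delta> \<Longrightarrow>
       R (P + X) \<in> MN N \<and> norm (R (P + X) - P - PiP P X) \<le> CR * (norm X)\<^sup>2"
    and E_exp: "\<And>Q. Q \<in> MN N \<Longrightarrow> E Q - E P - gradH E P \<bullet> (Q - P) \<le> CE * (norm (Q - P))\<^sup>2"
    and G: "norm (gradH E P) \<le> G" and "0 \<le> CR" "0 \<le> CE"
    and small: "\<beta> * G < \<delta>" "\<beta> * (CR * G) \<le> 1" "\<beta> * (G * CR + 4 * CE) \<le> 1 / 2"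
  shows "descent_step N E R \<beta> P"
proof -
  define w where "w = proj_grad E P"
  define P' where "P' = R (P - \<beta> *\<^sub>R w)"
  have Psymm: "symm P" and Pidem: "P ** P = P"
    using \<open>P \<in> MN N\<close> by (simp_all add: MN_symm MN_idempotent)
  have w_symm: "symm w"
    using C2_symm_gradH[OF \<open>C2 E\<close>] by (simp add: w_def proj_grad_def symm_PiP Psymm)
  have w_le: "norm w \<le> G"
    using norm_PiP_le[OF Psymm Pidem] G by (auto simp: w_def proj_grad_def intro: order_trans)
  have "norm (- \<beta> *\<^sub>R w) < \<delta>"
    using w_le small(1) \<open>0 < \<beta>\<close> by (smt (verit) mult_left_mono norm_scaleR)
  from R_exp[OF symm_scaleR[OF w_symm] this]
  have P'_MN: "P' \<in> MN N" and "norm (P' - P - PiP P (- \<beta> *\<^sub>R w)) \<le> CR * (norm (- \<beta> *\<^sub>R w))\<^sup>2"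
    by (simp_all add: P'_def)
  moreover have "PiP P (- \<beta> *\<^sub>R w) = - \<beta> *\<^sub>R w"
    unfolding PiP_scaleR by (simp add: w_def proj_grad_def PiP_PiP[OF Pidem])
  ultimately have P'_exp: "norm ((P' - P) + \<beta> *\<^sub>R w) \<le> CR * (\<beta> * norm w)\<^sup>2"
    using \<open>0 < \<beta>\<close> by (simp add: algebra_simps)
  have "gradH E P \<bullet> w = (norm w)\<^sup>2"
    by (simp add: w_def proj_grad_def inner_PiP_self Psymm Pidem)
  from inexact_gradient_step_decrease[OF this G w_le P'_exp \<open>0 < \<beta>\<close> \<open>0 \<le> CR\<close> \<open>0 \<le> CE\<close>]
  have step: "norm (P' - P) \<le> 2 * \<beta> * norm w"
    and decrease: "gradH E P \<bullet> (P' - P) + CE * (norm (P' - P))\<^sup>2 \<le> - (\<beta> / 2) * (norm w)\<^sup>2"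
    using small(2,3) by (simp_all add: mult_ac)
  with P'_MN E_exp[OF P'_MN] show ?thesis
    by (simp add: descent_step_def P'_def w_def)
qed

lemma retraction_gradient_step:
  fixes E :: "real^'n^'n \<Rightarrow> real" and R :: "real^'n^'n \<Rightarrow> real^'n^'n"
  assumes "C2 E" "C2 R" and retr: "\<And>P. P \<in> MN N \<Longrightarrow> retraction_at N R P"
  obtains \<beta>0 where "\<beta>0 > 0"
    "\<And>\<beta> P. 0 < \<beta> \<Longrightarrow> \<beta> \<le> \<beta>0 \<Longrightarrow> P \<in> MN N \<Longrightarrow> descent_step N E R \<beta> P"
proof -
  obtain \<delta> CR where "\<delta> > 0" "CR \<ge> 0" and R_exp: "\<And>P X. P \<in> MN N \<Longrightarrow> symm X \<Longrightarrow> norm X < \<delta> \<Longrightarrow>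
       R (P + X) \<in> MN N \<and> norm (R (P + X) - P - PiP P X) \<le> CR * (norm X)\<^sup>2"
    using retraction_uniform_expansion[OF \<open>C2 R\<close> retr] by blast
  obtain CE where "CE \<ge> 0" and E_exp: "\<And>P Q. P \<in> MN N \<Longrightarrow> Q \<in> MN N \<Longrightarrow>
      E Q - E P - gradH E P \<bullet> (Q - P) \<le> CE * (norm (Q - P))\<^sup>2"
    using energy_uniform_expansion[OF \<open>C2 E\<close>, of N] by blast
  obtain G where "G > 0" and G: "\<And>P. P \<in> MN N \<Longrightarrow> norm (gradH E P) \<le> G"
    using compact_imp_bounded[OF compact_continuous_image[OF
          continuous_on_subset[OF C2_continuous_on_gradH[OF \<open>C2 E\<close>]] compact_MN[of N]]]
    by (auto simp: bounded_pos)
  have "\<forall>\<^sub>F \<beta> in at_right 0. \<beta> * G < \<delta> \<and> \<beta> * (CR * G) < 1 \<and> \<beta> * (G * CR + 4 * CE) < 1 / 2"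
    using \<open>\<delta> > 0\<close> by (intro eventually_conj order_tendstoD(2)[of _ 0]) (auto intro!: tendsto_eq_intros)
  then obtain b where "b > 0" and b: "\<And>\<beta>. 0 < \<beta> \<Longrightarrow> \<beta> < b \<Longrightarrow>
      \<beta> * G < \<delta> \<and> \<beta> * (CR * G) < 1 \<and> \<beta> * (G * CR + 4 * CE) < 1 / 2"
    by (auto simp: eventually_at_right_field)
  show ?thesis
  proof (rule that[of "b / 2"])
    fix \<beta> and P :: "real^'n^'n"
    assume "0 < \<beta>" "\<beta> \<le> b / 2" "P \<in> MN N"
    with b[of \<beta>] \<open>b > 0\<close> show "descent_step N E R \<beta> P"
      by (intro retraction_step_descent[OF \<open>C2 E\<close> \<open>P \<in> MN N\<close> \<open>0 < \<beta>\<close> R_exp[OF \<open>P \<in> MN N\<close>]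
            E_exp[OF \<open>P \<in> MN N\<close>] G[OF \<open>P \<in> MN N\<close>] \<open>CR \<ge> 0\<close> \<open>CE \<ge> 0\<close>]) auto
  qed (use \<open>b > 0\<close> in simp)
qed

section \<open>Omega-limit sets of sequences\<close>

definition omega_limit :: "(nat \<Rightarrow> 'a::topological_space) \<Rightarrow> 'a set" where
  "omega_limit P = (\<Inter>n. closure (P ` {n..}))"

lemma closed_omega_limit: "closed (omega_limit P)"
  by (simp add: omega_limit_def closed_INT)

lemma omega_limit_subset:
  assumes "closed S" "\<And>k. P k \<in> S"
  shows "omega_limit P \<subseteq> S"
proof -
  have "omega_limit P \<subseteq> closure (P ` {0..})"
    unfolding omega_limit_def by blast
  also have "\<dots> \<subseteq> S"
    using assms by (intro closure_minimal) auto
  finally show ?thesis .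
qed

lemma compact_omega_limit:
  fixes P :: "nat \<Rightarrow> 'a::t2_space"
  assumes "compact S" "\<And>k. P k \<in> S"
  shows "compact (omega_limit P)"
proof -
  have "omega_limit P = S \<inter> omega_limit P"
    using omega_limit_subset[of S P, OF compact_imp_closed[OF assms(1)] assms(2)] by blast
  then show ?thesis
    using compact_Int_closed[OF \<open>compact S\<close> closed_omega_limit[of P]] by simp
qed

lemma omega_limit_frequently:
  assumes "x \<in> omega_limit P" "open U" "x \<in> U"
  shows "\<exists>\<^sub>F k in sequentially. P k \<in> U"
  unfolding frequently_sequentially
proof
  fix n
  have "U \<inter> closure (P ` {n..}) \<noteq> {}"
    using assms by (auto simp: omega_limit_def)
  then show "\<exists>k\<ge>n. P k \<in> U"
    using open_Int_closure_eq_empty[OF \<open>open U\<close>] by auto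
qed

lemma omega_limit_meets_closed:
  fixes P :: "nat \<Rightarrow> 'a::metric_space"
  assumes "compact S" "\<And>k. P k \<in> S" "\<exists>\<^sub>F k in sequentially. P k \<in> M" "closed M"
  shows "M \<inter> omega_limit P \<noteq> {}"
proof -
  have "infinite {k. P k \<in> M}"
    using assms(3) by (simp add: frequently_sequentially infinite_nat_iff_unbounded_le)
  then obtain r :: "nat \<Rightarrow> nat" where r: "strict_mono r" "\<And>n. P (r n) \<in> M"
    using infinite_enumerate by blast
  have "\<forall>n. (P \<circ> r) n \<in> S"
    using assms(2) by simp
  then obtain l s where "l \<in> S" "strict_mono s" and lim: "(P \<circ> r \<circ> s) \<longlonglongrightarrow> l"
    using \<open>compact S\<close> unfolding compact_def by blast
  have "l \<in> M"
    using lim r(2) by (intro Lim_in_closed_set[OF \<open>closed M\<close>]) auto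
  moreover have "l \<in> closure (P ` {n..})" for n
  proof (rule Lim_in_closed_set[OF closed_closure _ _ lim])
    have "n \<le> r (s k)" if "n \<le> k" for k
      using that seq_suble[OF strict_mono_o[OF r(1) \<open>strict_mono s\<close>], of k] by simp
    then show "\<forall>\<^sub>F k in sequentially. (P \<circ> r \<circ> s) k \<in> closure (P ` {n..})"
      unfolding eventually_sequentially by (auto intro: closure_subset[THEN subsetD])
  qed simp
  ultimately show ?thesis
    by (auto simp: omega_limit_def)
qed

lemma omega_limit_nonempty: "compact S \<Longrightarrow> (\<And>k. P k \<in> S) \<Longrightarrow> omega_limit P \<noteq> {}"
  for P :: "nat \<Rightarrow> 'a::metric_space"
  using omega_limit_meets_closed[of S P UNIV] by simp

lemma omega_limit_value:
  fixes h :: "'a::topological_space \<Rightarrow> 'b::metric_space"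
  assumes "closed S" "\<And>k. P k \<in> S" "continuous_on S h" "(\<lambda>k. h (P k)) \<longlonglongrightarrow> c"
    and "x \<in> omega_limit P"
  shows "h x = c"
proof -
  have "dist (h x) c \<le> e" if "e > 0" for e
  proof -
    obtain n where n: "\<And>k. k \<ge> n \<Longrightarrow> dist (h (P k)) c \<le> e"
      using assms(4) \<open>e > 0\<close> unfolding LIMSEQ_def by (meson less_imp_le)
    have "closed (S \<inter> h -` cball c e)"
      using assms(1,3) by (intro continuous_closed_preimage) auto
    moreover have "P ` {n..} \<subseteq> S \<inter> h -` cball c e"
      using n assms(2) by (auto simp: dist_commute)
    ultimately have "closure (P ` {n..}) \<subseteq> S \<inter> h -` cball c e"
      by (rule closure_minimal[rotated])
    then show ?thesis
      using assms(5) by (auto simp: omega_limit_def dist_commute)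
  qed
  then have "dist (h x) c \<le> 0"
    using field_le_epsilon[of "dist (h x) c" 0] by simp
  then show ?thesis
    by simp
qed

lemma tendsto_infdist_omega_limit:
  fixes P :: "nat \<Rightarrow> 'a::metric_space"
  assumes "compact S" "\<And>k. P k \<in> S"
  shows "(\<lambda>k. infdist (P k) (omega_limit P)) \<longlonglongrightarrow> 0"
proof (rule ccontr)
  assume "\<not> ?thesis"
  then obtain e where "e > 0"
    and far: "\<exists>\<^sub>F k in sequentially. \<not> dist (infdist (P k) (omega_limit P)) 0 < e"
    by (auto simp: tendsto_iff not_eventually)
  from far have "\<exists>\<^sub>F k in sequentially. P k \<in> {y. e \<le> infdist y (omega_limit P)}"
    by (rule frequently_elim1) (simp add: infdist_nonneg)
  moreover have "closed {y. e \<le> infdist y (omega_limit P)}"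
    by (intro closed_Collect_le continuous_intros)
  ultimately obtain x where "e \<le> infdist x (omega_limit P)" "x \<in> omega_limit P"
    using omega_limit_meets_closed[of S P, OF assms] by blast
  then show False
    using \<open>e > 0\<close> by simp
qed

lemma nat_upcrossing:
  fixes g :: "nat \<Rightarrow> real"
  shows "k \<le> m \<Longrightarrow> g k < a \<Longrightarrow> a \<le> g m \<Longrightarrow> \<exists>j. k \<le> j \<and> j < m \<and> g j < a \<and> a \<le> g (Suc j)"
proof (induction m)
  case (Suc m)
  show ?case
  proof (cases "a \<le> g m")
    case True
    with Suc.prems have "k \<le> m"
      by (metis le_Suc_eq not_le)
    with Suc.IH Suc.prems True show ?thesis
      using less_SucI by blast
  next
    case False
    with Suc.prems have "k \<le> m"
      by (metis le_Suc_eq not_le)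
    with False Suc.prems show ?thesis
      by (intro exI[of _ m]) simp
  qed
qed simp

lemma frequently_small_between_crossings:
  fixes g :: "nat \<Rightarrow> real"
  assumes "0 \<le> \<eta>" and jumps: "\<forall>\<^sub>F k in sequentially. g (Suc k) < g k + \<eta>"
    and low: "\<exists>\<^sub>F k in sequentially. g k < - \<eta>" and high: "\<exists>\<^sub>F k in sequentially. \<eta> < g k"
  shows "\<exists>\<^sub>F k in sequentially. \<bar>g k\<bar> \<le> \<eta>"
  unfolding frequently_sequentially
proof
  fix n
  obtain n0 where n0: "\<And>k. k \<ge> n0 \<Longrightarrow> g (Suc k) < g k + \<eta>"
    using jumps by (auto simp: eventually_sequentially)
  obtain k where "max n n0 \<le> k" and k_low: "g k < - \<eta>"
    using low unfolding frequently_sequentially by blast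
  then have k: "n \<le> k" "n0 \<le> k"
    by simp_all
  obtain m where m: "k \<le> m" "\<eta> < g m"
    using high unfolding frequently_sequentially by blast
  then have "- \<eta> \<le> g m"
    using \<open>0 \<le> \<eta>\<close> by linarith
  obtain j where j: "k \<le> j" "g j < - \<eta>" "- \<eta> \<le> g (Suc j)"
    using nat_upcrossing[OF m(1) k_low \<open>- \<eta> \<le> g m\<close>] by blast
  have "g (Suc j) < g j + \<eta>"
    using j(1) k(2) by (intro n0) simp
  with j have "\<bar>g (Suc j)\<bar> \<le> \<eta>"
    by linarith
  then show "\<exists>k\<ge>n. \<bar>g k\<bar> \<le> \<eta>"
    using j(1) k(1) le_SucI order_trans by blast
qed

lemma not_connected_separating_function:
  fixes L :: "'a::metric_space set"
  assumes "compact L" "\<not> connected L"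
  obtains \<eta> :: real and f :: "'a \<Rightarrow> real" and a b where "\<eta> > 0" "continuous_on UNIV f"
    "\<And>x y. \<bar>f x - f y\<bar> \<le> 2 * dist x y" "\<And>x. x \<in> L \<Longrightarrow> 2 * \<eta> \<le> \<bar>f x\<bar>"
    "a \<in> L" "f a < 0" "b \<in> L" "f b > 0"
proof -
  obtain A B where AB: "closed A" "closed B" "L \<subseteq> A \<union> B" "A \<inter> B \<inter> L = {}"
    and A: "A \<inter> L \<noteq> {}" and B: "B \<inter> L \<noteq> {}"
    using assms(2) unfolding connected_closed by blast
  have closed: "closed (A \<inter> L)" "closed (B \<inter> L)"
    using AB compact_imp_closed[OF assms(1)] by auto
  define f where "f x = infdist x (A \<inter> L) - infdist x (B \<inter> L)" for x
  have f_cont: "continuous_on UNIV f"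
    unfolding f_def by (intro continuous_intros)
  have f_lipschitz: "\<bar>f x - f y\<bar> \<le> 2 * dist x y" for x y
    using infdist_triangle_abs[of x "A \<inter> L" y] infdist_triangle_abs[of x "B \<inter> L" y]
    unfolding f_def by linarith
  have f_A: "f x < 0" if "x \<in> A \<inter> L" for x
    using that AB(4) infdist_nonneg[of x "B \<inter> L"] in_closed_iff_infdist_zero[OF closed(2) B, of x]
    by (auto simp: f_def)
  have f_B: "f x > 0" if "x \<in> B \<inter> L" for x
    using that AB(4) infdist_nonneg[of x "A \<inter> L"] in_closed_iff_infdist_zero[OF closed(1) A, of x]
    by (auto simp: f_def)
  obtain a b where a: "a \<in> A \<inter> L" and b: "b \<in> B \<inter> L"
    using A B by blast
  then have "L \<noteq> {}"
    by blast
  then obtain x0 where "x0 \<in> L" and x0: "\<And>y. y \<in> L \<Longrightarrow> \<bar>f x0\<bar> \<le> \<bar>f y\<bar>"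
    using continuous_attains_inf[OF assms(1), of "\<lambda>x. \<bar>f x\<bar>"] f_cont
    by (metis continuous_on_rabs continuous_on_subset top_greatest)
  have "f x0 \<noteq> 0"
    using \<open>x0 \<in> L\<close> AB(3) f_A f_B by force
  with x0 show ?thesis
    using that[of "\<bar>f x0\<bar> / 2" f a b] f_cont f_lipschitz a b f_A f_B by auto
qed

lemma connected_omega_limit:
  fixes P :: "nat \<Rightarrow> 'a::metric_space"
  assumes "compact S" "\<And>k. P k \<in> S" and steps: "(\<lambda>k. dist (P (Suc k)) (P k)) \<longlonglongrightarrow> 0"
  shows "connected (omega_limit P)"
proof (rule ccontr)
  \<comment> \<open>A function separating the two parts must change sign along the sequence infinitely often
    with small jumps, so infinitely many terms lie in the closed set \<open>\<bar>f\<bar> \<le> \<eta>\<close>, which contains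
    no \<open>\<omega>\<close>-limit point.\<close>
  assume "\<not> connected (omega_limit P)"
  then obtain \<eta> and f :: "'a \<Rightarrow> real" and a b where "\<eta> > 0" and f_cont: "continuous_on UNIV f"
    and f_lipschitz: "\<And>x y. \<bar>f x - f y\<bar> \<le> 2 * dist x y"
    and f_big: "\<And>x. x \<in> omega_limit P \<Longrightarrow> 2 * \<eta> \<le> \<bar>f x\<bar>"
    and a: "a \<in> omega_limit P" "f a < 0" and b: "b \<in> omega_limit P" "f b > 0"
    by (rule not_connected_separating_function[OF compact_omega_limit[of S P, OF assms(1,2)]]) blast+
  have "\<forall>\<^sub>F k in sequentially. dist (P (Suc k)) (P k) < \<eta> / 2"
    using steps \<open>\<eta> > 0\<close> by (intro order_tendstoD(2)) auto
  then have "\<forall>\<^sub>F k in sequentially. f (P (Suc k)) < f (P k) + \<eta>"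
  proof (rule eventually_mono)
    fix k
    assume "dist (P (Suc k)) (P k) < \<eta> / 2"
    with f_lipschitz[of "P (Suc k)" "P k"] show "f (P (Suc k)) < f (P k) + \<eta>"
      by linarith
  qed
  moreover have "\<exists>\<^sub>F k in sequentially. P k \<in> {x. f x < - \<eta>}"
    using a f_big[OF a(1)] \<open>\<eta> > 0\<close>
    by (intro omega_limit_frequently open_Collect_less f_cont continuous_intros) auto
  moreover have "\<exists>\<^sub>F k in sequentially. P k \<in> {x. \<eta> < f x}"
    using b f_big[OF b(1)] \<open>\<eta> > 0\<close>
    by (intro omega_limit_frequently open_Collect_less f_cont continuous_intros) auto
  ultimately have "\<exists>\<^sub>F k in sequentially. P k \<in> {x. \<bar>f x\<bar> \<le> \<eta>}"
    using frequently_small_between_crossings[of \<eta> "\<lambda>k. f (P k)"] \<open>\<eta> > 0\<close> by simp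
  moreover have "closed {x. \<bar>f x\<bar> \<le> \<eta>}"
    by (intro closed_Collect_le continuous_intros f_cont)
  ultimately obtain x where "\<bar>f x\<bar> \<le> \<eta>" "x \<in> omega_limit P"
    using omega_limit_meets_closed[of S P, OF assms(1,2)] by blast
  with f_big \<open>\<eta> > 0\<close> show False
    by fastforce
qed

section \<open>Convergence of sufficient-decrease sequences\<close>

lemma sufficient_decrease_convergence:
  fixes e r :: "nat \<Rightarrow> real"
  assumes decrease: "\<And>k. e (Suc k) \<le> e k - a * (r k)\<^sup>2" and "0 < a" and "bdd_below (range e)"
  shows "antimono e" "convergent e" "r \<longlonglongrightarrow> 0"
proof -
  show "antimono e"
    using decrease \<open>0 < a\<close> by (intro decseq_SucI) (smt (verit) mult_nonneg_nonneg zero_le_power2)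
  then obtain c where c: "e \<longlonglongrightarrow> c"
    using decseq_convergent \<open>bdd_below (range e)\<close> by (metis bdd_below.E rangeI)
  then show "convergent e"
    by (rule convergentI)
  have bound: "(r k)\<^sup>2 \<le> (e k - e (Suc k)) / a" for k
    using decrease[of k] \<open>0 < a\<close> by (simp add: field_simps)
  have "(\<lambda>k. e (Suc k)) \<longlonglongrightarrow> c"
    using c by (rule LIMSEQ_Suc)
  with c \<open>0 < a\<close> have "(\<lambda>k. (e k - e (Suc k)) / a) \<longlonglongrightarrow> (c - c) / a"
    by (intro tendsto_intros) auto
  then have upper: "(\<lambda>k. (e k - e (Suc k)) / a) \<longlonglongrightarrow> 0"
    by simp
  have "(\<lambda>k. (r k)\<^sup>2) \<longlonglongrightarrow> 0"
    by (rule tendsto_sandwich[OF _ _ tendsto_const upper]) (simp_all add: bound)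
  then have "(\<lambda>k. sqrt ((r k)\<^sup>2)) \<longlonglongrightarrow> sqrt 0"
    by (rule tendsto_real_sqrt)
  then show "r \<longlonglongrightarrow> 0"
    by (simp add: tendsto_rabs_zero_iff)
qed

lemma tendsto_infdist_component:
  fixes P :: "nat \<Rightarrow> 'a::metric_space"
  assumes "compact S" "\<And>k. P k \<in> S" "(\<lambda>k. dist (P (Suc k)) (P k)) \<longlonglongrightarrow> 0"
    and "omega_limit P \<subseteq> C"
  obtains A where "A \<in> components C" "(\<lambda>k. infdist (P k) A) \<longlonglongrightarrow> 0"
proof -
  obtain x0 where x0: "x0 \<in> omega_limit P"
    using omega_limit_nonempty[of S P] assms(1,2) by blast
  define A where "A = connected_component_set C x0"
  have "omega_limit P \<subseteq> A"
    unfolding A_def using connected_omega_limit[OF assms(1-3)] assms(4) x0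
    by (intro connected_component_maximal)
  then have closer: "infdist (P k) A \<le> infdist (P k) (omega_limit P)" for k
    using x0 by (intro infdist_mono) auto
  have upper: "(\<lambda>k. infdist (P k) (omega_limit P)) \<longlonglongrightarrow> 0"
    by (rule tendsto_infdist_omega_limit[of S P, OF assms(1,2)])
  have "(\<lambda>k. infdist (P k) A) \<longlonglongrightarrow> 0"
    by (rule tendsto_sandwich[OF _ _ tendsto_const upper]) (simp_all add: infdist_nonneg closer)
  moreover have "A \<in> components C"
    unfolding A_def using x0 assms(4) by (intro componentsI) auto
  ultimately show ?thesis
    using that by blast
qed

theorem descent_sequence_convergence:
  fixes P :: "nat \<Rightarrow> 'a::metric_space" and f :: "'a \<Rightarrow> real" and v :: "'a \<Rightarrow> 'b::real_normed_vector"
  assumes "compact S" "\<And>k. P k \<in> S" "continuous_on S f" "continuous_on S v"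
    and decrease: "\<And>k. f (P (Suc k)) \<le> f (P k) - a * (norm (v (P k)))\<^sup>2" and "0 < a"
    and step: "\<And>k. dist (P (Suc k)) (P k) \<le> b * norm (v (P k))"
  shows "antimono (\<lambda>k. f (P k)) \<and>
    (\<exists>c. (\<lambda>k. f (P k)) \<longlonglongrightarrow> c \<and> (\<lambda>k. v (P k)) \<longlonglongrightarrow> 0 \<and>
         (\<lambda>k. dist (P (Suc k)) (P k)) \<longlonglongrightarrow> 0 \<and>
         (\<exists>A\<in>components {x\<in>S. f x = c \<and> v x = 0}. (\<lambda>k. infdist (P k) A) \<longlonglongrightarrow> 0))"
proof -
  have "bdd_below (f ` S)"
    using compact_imp_bounded[OF compact_continuous_image[OF assms(3,1)]] by (rule bounded_imp_bdd_below)
  then have "bdd_below (range (\<lambda>k. f (P k)))"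
    using assms(2) by (auto simp: bdd_below_def)
  from sufficient_decrease_convergence[of "\<lambda>k. f (P k)", OF decrease \<open>0 < a\<close> this]
  obtain c where anti: "antimono (\<lambda>k. f (P k))" and f_lim: "(\<lambda>k. f (P k)) \<longlonglongrightarrow> c"
    and "(\<lambda>k. norm (v (P k))) \<longlonglongrightarrow> 0"
    by (auto simp: convergent_def)
  then have v_lim: "(\<lambda>k. v (P k)) \<longlonglongrightarrow> 0"
    by (simp add: tendsto_norm_zero_iff)
  have "(\<lambda>k. b * norm (v (P k))) \<longlonglongrightarrow> b * 0"
    by (intro tendsto_intros) fact
  then have upper: "(\<lambda>k. b * norm (v (P k))) \<longlonglongrightarrow> 0"
    by simp
  have step_lim: "(\<lambda>k. dist (P (Suc k)) (P k)) \<longlonglongrightarrow> 0"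
    by (rule tendsto_sandwich[OF _ _ tendsto_const upper]) (simp_all add: step)
  have "omega_limit P \<subseteq> S"
    by (rule omega_limit_subset[of S P, OF compact_imp_closed[OF assms(1)] assms(2)])
  moreover have "f x = c" "v x = 0" if "x \<in> omega_limit P" for x
    using omega_limit_value[of S P, OF compact_imp_closed[OF assms(1)] assms(2) _ _ that] assms(3,4) f_lim v_lim
    by auto
  ultimately have "omega_limit P \<subseteq> {x\<in>S. f x = c \<and> v x = 0}"
    by blast
  from tendsto_infdist_component[of S P, OF assms(1,2) step_lim this]
  show ?thesis
    using anti f_lim v_lim step_lim by blast
qed

lemma rgd_iter_convergence:
  fixes E :: "real^'n^'n \<Rightarrow> real" and R :: "real^'n^'n \<Rightarrow> real^'n^'n"
  assumes "C2 E" "0 < \<beta>" "P0 \<in> MN N" and step: "\<And>P. P \<in> MN N \<Longrightarrow> descent_step N E R \<beta> P"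
  shows "let P = rgd_iter E R \<beta> P0 in
           antimono (\<lambda>k. E (P k)) \<and>
           (\<exists>Ec. critical_value N E Ec \<and> (\<lambda>k. E (P k)) \<longlonglongrightarrow> Ec \<and>
              (\<lambda>k. PiP (P k) (gradH E (P k))) \<longlonglongrightarrow> 0 \<and>
              (\<lambda>k. norm (P (Suc k) - P k)) \<longlonglongrightarrow> 0 \<and>
              (\<exists>Ac. Ac \<in> components (crit_set N E Ec) \<and> (\<lambda>k. infdist (P k) Ac) \<longlonglongrightarrow> 0))"
proof -
  define P where "P = rgd_iter E R \<beta> P0"
  have P_Suc: "P (Suc k) = R (P k - \<beta> *\<^sub>R proj_grad E (P k))" for k
    by (simp add: P_def proj_grad_def Let_def)
  have P_MN: "P k \<in> MN N" for k
  proof (induction k)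
    case 0
    show ?case
      using \<open>P0 \<in> MN N\<close> by (simp add: P_def)
  next
    case (Suc k)
    show ?case
      using step[OF Suc] by (simp add: descent_step_def Let_def P_Suc)
  qed
  have decrease: "E (P (Suc k)) \<le> E (P k) - \<beta> / 2 * (norm (proj_grad E (P k)))\<^sup>2"
    and moves: "dist (P (Suc k)) (P k) \<le> 2 * \<beta> * norm (proj_grad E (P k))" for k
    using step[OF P_MN[of k]] by (simp_all add: descent_step_def Let_def P_Suc dist_norm)
  have crit: "{x \<in> MN N. E x = c \<and> proj_grad E x = 0} = crit_set N E c" for c
    by (auto simp: crit_set_def proj_grad_def)
  obtain c A where "antimono (\<lambda>k. E (P k))" "(\<lambda>k. E (P k)) \<longlonglongrightarrow> c"
    "(\<lambda>k. proj_grad E (P k)) \<longlonglongrightarrow> 0" "(\<lambda>k. dist (P (Suc k)) (P k)) \<longlonglongrightarrow> 0"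
    and A: "A \<in> components (crit_set N E c)" "(\<lambda>k. infdist (P k) A) \<longlonglongrightarrow> 0"
    using descent_sequence_convergence[where S = "MN N" and P = P, OF compact_MN P_MN
        C2_imp_continuous_on[OF \<open>C2 E\<close>, THEN continuous_on_subset]
        C2_continuous_on_proj_grad[OF \<open>C2 E\<close>, THEN continuous_on_subset] decrease _ moves] \<open>0 < \<beta>\<close>
    by (auto simp: crit)
  moreover have "critical_value N E c"
    using in_components_nonempty[OF A(1)] in_components_subset[OF A(1)]
    by (auto simp: critical_value_def critical_point_def crit_set_def)
  ultimately show ?thesis
    unfolding Let_def P_def[symmetric] proj_grad_def dist_norm by blast
qed

theorem theorem3p1:
  fixes E :: "real^'n^'n \<Rightarrow> real"
    and R :: "real^'n^'n \<Rightarrow> real^'n^'n"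
    and N :: nat
  assumes N: "1 \<le> N" "N \<le> CARD('n)"
    and E_C2: "C2 E"
    and R_C2: "C2 R"
    and R_H: "\<And>A. symm A \<Longrightarrow> symm (R A)"
    and R_retr: "\<And>P. P \<in> MN N \<Longrightarrow> \<exists>\<delta>>0. \<exists>C. \<forall>X. symm X \<and> norm X < \<delta> \<longrightarrow>
                    R (P + X) \<in> MN N \<and> norm (R (P + X) - P - PiP P X) \<le> C * (norm X)\<^sup>2"
  shows "\<exists>\<beta>0>0. \<forall>\<beta> P0. 0 < \<beta> \<and> \<beta> \<le> \<beta>0 \<and> P0 \<in> MN N \<longrightarrow>
           (let P = rgd_iter E R \<beta> P0 in
             antimono (\<lambda>k. E (P k)) \<and>
             (\<exists>Ec. critical_value N E Ec \<and> (\<lambda>k. E (P k)) \<longlonglongrightarrow> Ec \<and>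
                (\<lambda>k. PiP (P k) (gradH E (P k))) \<longlonglongrightarrow> 0 \<and>
                (\<lambda>k. norm (P (Suc k) - P k)) \<longlonglongrightarrow> 0 \<and>
                (\<exists>Ac. Ac \<in> components (crit_set N E Ec) \<and>
                      (\<lambda>k. infdist (P k) Ac) \<longlonglongrightarrow> 0)))"
proof -
  obtain \<beta>0 where "\<beta>0 > 0"
    and "\<And>\<beta> P. 0 < \<beta> \<Longrightarrow> \<beta> \<le> \<beta>0 \<Longrightarrow> P \<in> MN N \<Longrightarrow> descent_step N E R \<beta> P"
    using retraction_gradient_step[OF E_C2 R_C2, of N] R_retr unfolding retraction_at_def by blast
  then show ?thesis
    using rgd_iter_convergence[OF E_C2] by blast
qed

end
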